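(* Let $m\geq1$ and let $\{\Lambda_i\}_{i\geq1}$ be an infinite family of proper lattices in $\mathbb{Z}^m$ that are pairwise coprime. Then there is an infinite set $\{i_k\}_{k\geq1}$ of indices such that the integers $[\mathbb{Z}^m:\Lambda_{i_k}]$, $k\geq1$, are pairwise coprime.
   Context: A lattice in $\mathbb{Z}^m$ is a subgroup of finite index; it is proper if it is not $\mathbb{Z}^m$. Proper lattices $\Lambda,\Lambda'$ are coprime if $\Lambda+\Lambda'=\mathbb{Z}^m$. *)

theory Defs
  imports "HOL-Analysis.Analysis"
begin

text \<open>Z^m is modelled as the type int^'m for a finite index type 'm (so m = CARD('m) >= 1).\<close>

definition lattice_cosets :: "(int^'m) set \<Rightarrow> (int^'m) set set" where
  "lattice_cosets L = range (\<lambda>x. (\<lambda>y. x + y) ` L)"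

definition additive_subgroup :: "(int^'m) set \<Rightarrow> bool" where
  "additive_subgroup L \<longleftrightarrow> 0 \<in> L \<and> (\<forall>x\<in>L. \<forall>y\<in>L. x + y \<in> L) \<and> (\<forall>x\<in>L. - x \<in> L)"

definition is_lattice :: "(int^'m) set \<Rightarrow> bool" where
  "is_lattice L \<longleftrightarrow> additive_subgroup L \<and> finite (lattice_cosets L)"

definition lattice_index :: "(int^'m) set \<Rightarrow> nat" where
  "lattice_index L = card (lattice_cosets L)"

definition proper_lattice :: "(int^'m) set \<Rightarrow> bool" where
  "proper_lattice L \<longleftrightarrow> is_lattice L \<and> L \<noteq> UNIV"

definition lattices_coprime :: "(int^'m) set \<Rightarrow> (int^'m) set \<Rightarrow> bool" where
  "lattices_coprime L L' \<longleftrightarrow> {a + b | a b. a \<in> L \<and> b \<in> L'} = UNIV"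

end

theory Submission
  imports Defs "HOL-Algebra.Sylow" "HOL-Algebra.Multiplicative_Group" "HOL-Library.Ramsey"
begin

text \<open>
  If a prime \<open>p\<close> divides \<open>[\<int>\<^sup>m : \<Lambda>]\<close>, then the quotient \<open>\<int>\<^sup>m/\<Lambda>\<close> has an element of
  order \<open>p\<close>, so multiplication by \<open>p\<close> on it is not surjective, i.e. \<open>\<Lambda> + p\<int>\<^sup>m \<noteq> \<int>\<^sup>m\<close>.
  For \<open>i \<noteq> j\<close> coprimality forces \<open>\<Lambda>\<^sub>i + p\<int>\<^sup>m \<noteq> \<Lambda>\<^sub>j + p\<int>\<^sup>m\<close>, and there are only finitely
  many subgroups containing \<open>p\<int>\<^sup>m\<close>; hence each prime divides only finitely many indices.
  So every index shares a factor with only finitely many others, and Ramsey's theorem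
  extracts an infinite family of pairwise coprime indices.
\<close>

definition int_vec_group :: "(int^'m) monoid" where
  "int_vec_group = \<lparr>carrier = UNIV, mult = (+), one = 0\<rparr>"

lemma int_vec_group_simps [simp]:
  "carrier int_vec_group = UNIV" "mult int_vec_group = (+)" "one int_vec_group = 0"
  by (auto simp: int_vec_group_def)

lemma comm_group_int_vec_group: "comm_group (int_vec_group :: (int^'m) monoid)"
proof (rule comm_groupI)
  fix x :: "int^'m"
  show "\<exists>y\<in>carrier int_vec_group. y \<otimes>\<^bsub>int_vec_group\<^esub> x = \<one>\<^bsub>int_vec_group\<^esub>"
    by (rule bexI[of _ "- x"]) auto
qed (auto simp: add.assoc add.commute)

lemma int_vec_group_inv: "inv\<^bsub>(int_vec_group :: (int^'m) monoid)\<^esub> x = - x"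
proof -
  interpret comm_group "int_vec_group :: (int^'m) monoid" by (rule comm_group_int_vec_group)
  show ?thesis by (rule inv_equality) auto
qed

lemma int_vec_group_nat_pow: "x [^]\<^bsub>(int_vec_group :: (int^'m) monoid)\<^esub> (n::nat) = int n *s x"
  by (induction n) (simp_all add: vec_eq_iff distrib_right)

lemma int_vec_group_r_coset: "L #>\<^bsub>(int_vec_group :: (int^'m) monoid)\<^esub> x = (\<lambda>y. x + y) ` L"
  unfolding r_coset_def by (auto simp: add.commute)

lemma int_vec_group_rcosets: "rcosets\<^bsub>(int_vec_group :: (int^'m) monoid)\<^esub> L = lattice_cosets L"
  unfolding RCOSETS_def lattice_cosets_def int_vec_group_r_coset by auto

lemma subgroup_int_vec_group:
  "Defs.additive_subgroup L \<Longrightarrow> subgroup L (int_vec_group :: (int^'m) monoid)"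
proof -
  assume "Defs.additive_subgroup L"
  interpret comm_group "int_vec_group :: (int^'m) monoid" by (rule comm_group_int_vec_group)
  show ?thesis using \<open>Defs.additive_subgroup L\<close> unfolding Defs.additive_subgroup_def
    by (intro subgroupI) (auto simp: int_vec_group_inv)
qed

lemma (in group) not_inj_on_nat_pow_prime:
  assumes fin: "finite (carrier G)" and p: "prime p" and p_dvd: "p dvd order G"
  shows "\<not> inj_on (\<lambda>x. x [^] p) (carrier G)"
proof
  assume inj: "inj_on (\<lambda>x. x [^] p) (carrier G)"
  have "order G = p ^ 1 * (order G div p)" using p_dvd by simp
  from sylow_thm[OF p is_group this fin]
  obtain H where H: "subgroup H G" "card H = p" by auto
  have "\<not> H \<subseteq> {\<one>}"
    using H(2) p card_mono[of "{\<one>}" H] prime_ge_2_nat[of p] by auto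
  then obtain c where c: "c \<in> H" "c \<noteq> \<one>" by blast
  interpret H: group "G\<lparr>carrier := H\<rparr>" by (rule subgroup.subgroup_is_group[OF H(1) is_group])
  have "c [^]\<^bsub>G\<lparr>carrier := H\<rparr>\<^esub> order (G\<lparr>carrier := H\<rparr>) = \<one>"
    using H.pow_order_eq_1[of c] c(1) by simp
  then have "c [^] p = \<one> [^] p"
    using H(2) nat_pow_consistent[of c p H] by (simp add: order_def)
  moreover have "c \<in> carrier G" by (rule subgroup.mem_carrier[OF H(1) c(1)])
  ultimately show False using inj c(2) by (meson one_closed inj_onD)
qed

definition plus_multiples :: "(int^'m) set \<Rightarrow> int \<Rightarrow> (int^'m) set" where
  "plus_multiples L c = {a + c *s b | a b. a \<in> L}"

lemma subset_plus_multiples: "L \<subseteq> plus_multiples L c"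
  unfolding plus_multiples_def by (force intro: exI[of _ 0])

lemma plus_multiples_add_multiple:
  "x + c *s y \<in> plus_multiples L c \<longleftrightarrow> x \<in> plus_multiples L c"
proof
  assume "x + c *s y \<in> plus_multiples L c"
  then obtain a b where "x + c *s y = a + c *s b" "a \<in> L" unfolding plus_multiples_def by blast
  then have "x = a + c *s (b - y)" "a \<in> L" by (simp_all add: vec_eq_iff algebra_simps)
  then show "x \<in> plus_multiples L c" unfolding plus_multiples_def by blast
next
  assume "x \<in> plus_multiples L c"
  then obtain a b where "x = a + c *s b" "a \<in> L" unfolding plus_multiples_def by blast
  then have "x + c *s y = a + c *s (b + y)" "a \<in> L" by (simp_all add: vec_eq_iff algebra_simps)
  then show "x + c *s y \<in> plus_multiples L c" unfolding plus_multiples_def by blast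
qed

lemma plus_multiples_prime_ne_UNIV:
  fixes L :: "(int^'m) set"
  assumes p: "prime p" and L: "is_lattice L" and p_dvd: "p dvd lattice_index L"
  shows "plus_multiples L (int p) \<noteq> UNIV"
proof
  assume onto: "plus_multiples L (int p) = UNIV"
  interpret Z: comm_group "int_vec_group :: (int^'m) monoid" by (rule comm_group_int_vec_group)
  have sg: "subgroup L (int_vec_group :: (int^'m) monoid)"
    using L subgroup_int_vec_group unfolding is_lattice_def by blast
  then interpret N: normal L "int_vec_group :: (int^'m) monoid" by (rule Z.subgroup_imp_normal)
  define G where "G = (int_vec_group :: (int^'m) monoid) Mod L"
  interpret G: group G unfolding G_def by (rule N.factorgroup_is_group)
  have carrier_G: "carrier G = range (\<lambda>x. L #>\<^bsub>int_vec_group\<^esub> x)"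
    by (simp add: G_def carrier_FactGroup)
  have fin: "finite (carrier G)" and order: "order G = lattice_index L"
    using L by (simp_all add: G_def FactGroup_def int_vec_group_rcosets is_lattice_def
        order_def lattice_index_def)
  have pow: "(L #>\<^bsub>int_vec_group\<^esub> x) [^]\<^bsub>G\<^esub> p = L #>\<^bsub>int_vec_group\<^esub> (int p *s x)"
    for x :: "int^'m"
    using hom_nat_pow[OF N.r_coset_hom_Mod _ Z.is_group N.factorgroup_is_group, of x p]
    by (simp add: G_def int_vec_group_nat_pow)
  have "carrier G \<subseteq> (\<lambda>D. D [^]\<^bsub>G\<^esub> p) ` carrier G"
  proof
    fix D assume "D \<in> carrier G"
    then obtain z where z: "D = L #>\<^bsub>int_vec_group\<^esub> z" using carrier_G by auto
    obtain a b where ab: "z = a + int p *s b" "a \<in> L"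
      using onto unfolding plus_multiples_def by blast
    then have "z \<in> L #>\<^bsub>int_vec_group\<^esub> (int p *s b)"
      by (simp add: int_vec_group_r_coset add.commute)
    then have "D = (L #>\<^bsub>int_vec_group\<^esub> b) [^]\<^bsub>G\<^esub> p"
      using Z.repr_independence[OF _ _ sg] z pow by simp
    then show "D \<in> (\<lambda>D. D [^]\<^bsub>G\<^esub> p) ` carrier G" using carrier_G by blast
  qed
  then have "inj_on (\<lambda>D. D [^]\<^bsub>G\<^esub> p) (carrier G)" by (rule finite_surj_inj[OF fin])
  then show False using G.not_inj_on_nat_pow_prime[OF fin p] p_dvd order by simp
qed

lemma finite_vectors_in:
  fixes B :: "'n::finite \<Rightarrow> 'a set"
  assumes "\<And>i. finite (B i)"
  shows "finite {v :: 'a^'n. \<forall>i. v $ i \<in> B i}"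
proof (rule finite_subset)
  show "{v :: 'a^'n. \<forall>i. v $ i \<in> B i} \<subseteq> vec_lambda ` Pi\<^sub>E UNIV B"
  proof
    fix v :: "'a^'n" assume "v \<in> {v. \<forall>i. v $ i \<in> B i}"
    then show "v \<in> vec_lambda ` Pi\<^sub>E UNIV B"
      by (intro image_eqI[of v vec_lambda "vec_nth v"]) auto
  qed
  show "finite (vec_lambda ` Pi\<^sub>E UNIV B)" by (intro finite_imageI finite_PiE assms) simp
qed

text \<open>\<open>L + c\<int>\<^sup>m\<close> is determined by its intersection with the box \<open>[0, c)\<^sup>m\<close> of residues mod \<open>c\<close>.\<close>
lemma finite_range_plus_multiples:
  fixes c :: int
  assumes "c > 0"
  shows "finite (range (\<lambda>L :: (int^'m) set. plus_multiples L c))"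
proof -
  define B where "B = {x :: int^'m. \<forall>k. x $ k \<in> {0..<c}}"
  define red where "red x = (\<chi> k. x $ k mod c)" for x :: "int^'m"
  have red_B: "red x \<in> B" for x using assms by (simp add: B_def red_def)
  have red_iff: "red x \<in> plus_multiples L c \<longleftrightarrow> x \<in> plus_multiples L c" for x L
  proof -
    have "x = red x + c *s (\<chi> k. x $ k div c)" by (simp add: red_def vec_eq_iff)
    then show ?thesis using plus_multiples_add_multiple by metis
  qed
  have "inj_on (\<lambda>M. M \<inter> B) (range (\<lambda>L. plus_multiples L c))"
  proof (rule inj_onI)
    fix M M' assume "M \<in> range (\<lambda>L. plus_multiples L c)" "M' \<in> range (\<lambda>L. plus_multiples L c)"
      and "M \<inter> B = M' \<inter> B"
    then show "M = M'" using red_iff red_B by blast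
  qed
  moreover have "(\<lambda>M. M \<inter> B) ` range (\<lambda>L. plus_multiples L c) \<subseteq> Pow B" by blast
  moreover have "finite B" unfolding B_def by (rule finite_vectors_in) simp
  ultimately show ?thesis by (meson finite_Pow_iff inj_on_finite)
qed

lemma plus_multiples_eq_UNIV_if_coprime:
  assumes L: "Defs.additive_subgroup L" and coprime: "lattices_coprime L L'"
    and sub: "L' \<subseteq> plus_multiples L c"
  shows "plus_multiples L c = UNIV"
proof -
  have "z \<in> plus_multiples L c" for z
  proof -
    obtain a b where "z = a + b" "a \<in> L" "b \<in> L'"
      using coprime unfolding lattices_coprime_def by blast
    moreover obtain a' b' where "b = a' + c *s b'" "a' \<in> L"
      using sub \<open>b \<in> L'\<close> unfolding plus_multiples_def by blast
    ultimately have "z = (a + a') + c *s b'" "a + a' \<in> L"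
      using L unfolding Defs.additive_subgroup_def by (simp_all add: add.assoc)
    then show ?thesis unfolding plus_multiples_def by blast
  qed
  then show ?thesis by blast
qed

lemma finite_prime_dvd_lattice_index:
  fixes \<Lambda> :: "'i \<Rightarrow> (int^'m) set"
  assumes p: "prime p" and lattice: "\<And>i. is_lattice (\<Lambda> i)"
    and coprime: "\<And>i j. i \<noteq> j \<Longrightarrow> lattices_coprime (\<Lambda> i) (\<Lambda> j)"
  shows "finite {i. p dvd lattice_index (\<Lambda> i)}"
proof -
  let ?M = "\<lambda>i. plus_multiples (\<Lambda> i) (int p)"
  have "inj_on ?M {i. p dvd lattice_index (\<Lambda> i)}"
  proof (rule inj_onI, rule ccontr)
    fix i j assume i: "i \<in> {i. p dvd lattice_index (\<Lambda> i)}" and eq: "?M i = ?M j" and "i \<noteq> j"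
    have "\<Lambda> j \<subseteq> ?M i" using subset_plus_multiples[of "\<Lambda> j"] eq by simp
    then have "?M i = UNIV"
      using plus_multiples_eq_UNIV_if_coprime[OF _ coprime[OF \<open>i \<noteq> j\<close>]] lattice[of i]
      by (simp add: is_lattice_def)
    then show False using plus_multiples_prime_ne_UNIV[OF p lattice] i by blast
  qed
  moreover have "finite (range (\<lambda>L :: (int^'m) set. plus_multiples L (int p)))"
    using p by (intro finite_range_plus_multiples) (simp add: prime_gt_0_nat)
  moreover have "?M ` {i. p dvd lattice_index (\<Lambda> i)} \<subseteq> range (\<lambda>L. plus_multiples L (int p))"
    by blast
  ultimately show ?thesis by (meson inj_on_finite)
qed

lemma lattice_index_pos: "is_lattice L \<Longrightarrow> lattice_index L > 0"
  unfolding is_lattice_def lattice_index_def lattice_cosets_def by (simp add: card_gt_0_iff)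

lemma finite_not_coprime_lattice_index:
  fixes \<Lambda> :: "'i \<Rightarrow> (int^'m) set"
  assumes lattice: "\<And>i. is_lattice (\<Lambda> i)"
    and coprime: "\<And>i j. i \<noteq> j \<Longrightarrow> lattices_coprime (\<Lambda> i) (\<Lambda> j)"
  shows "finite {j. \<not> coprime (lattice_index (\<Lambda> i)) (lattice_index (\<Lambda> j))}"
proof (rule finite_subset)
  let ?n = "\<lambda>i. lattice_index (\<Lambda> i)"
  show "{j. \<not> coprime (?n i) (?n j)} \<subseteq> (\<Union>p \<in> prime_factors (?n i). {j. p dvd ?n j})"
  proof
    fix j assume "j \<in> {j. \<not> coprime (?n i) (?n j)}"
    then obtain p where "prime p" "p dvd gcd (?n i) (?n j)"
      using prime_factor_nat[of "gcd (?n i) (?n j)"] by (auto simp: coprime_iff_gcd_eq_1)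
    then show "j \<in> (\<Union>p \<in> prime_factors (?n i). {j. p dvd ?n j})"
      using lattice_index_pos[OF lattice, of i] by (auto simp: in_prime_factors_iff)
  qed
  show "finite (\<Union>p \<in> prime_factors (?n i). {j. p dvd ?n j})"
    using finite_prime_dvd_lattice_index[OF _ lattice coprime]
    by (auto simp: in_prime_factors_iff)
qed

lemma infinite_independent_subset:
  assumes "infinite A" and sym: "\<And>x y. R x y \<Longrightarrow> R y x" and fin: "\<And>x. finite {y. R x y}"
  shows "\<exists>I \<subseteq> A. infinite I \<and> (\<forall>x\<in>I. \<forall>y\<in>I. x \<noteq> y \<longrightarrow> \<not> R x y)"
proof -
  define f where "f X = (if \<exists>x\<in>X. \<exists>y\<in>X. x \<noteq> y \<and> R x y then 1 else 0 :: nat)" for X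
  have f_pair: "f {x, y} = (if R x y then 1 else 0)" if "x \<noteq> y" for x y
  proof -
    have "R x y \<or> R y x \<longleftrightarrow> R x y" using sym by blast
    then show ?thesis using that unfolding f_def by auto
  qed
  have "\<forall>x\<in>A. \<forall>y\<in>A. x \<noteq> y \<longrightarrow> f {x, y} < 2" by (simp add: f_def)
  from Ramsey2[OF \<open>infinite A\<close> this] obtain Y t where Y: "Y \<subseteq> A" "infinite Y" "t < 2"
    and hom: "\<forall>x\<in>Y. \<forall>y\<in>Y. x \<noteq> y \<longrightarrow> f {x, y} = t"
    by blast
  show ?thesis
  proof (cases "t = 0")
    case True
    have "\<not> R x y" if "x \<in> Y" "y \<in> Y" "x \<noteq> y" for x y
    proof -
      have "f {x, y} = 0" using hom that True by blast
      then show ?thesis using f_pair[OF that(3)] by (simp split: if_splits)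
    qed
    then show ?thesis using Y by blast
  next
    case False
    with Y(3) have "t = 1" by simp
    obtain x where "x \<in> Y" using \<open>infinite Y\<close> infinite_imp_nonempty by blast
    have "Y \<subseteq> insert x {y. R x y}"
    proof
      fix y assume "y \<in> Y"
      show "y \<in> insert x {y. R x y}"
      proof (cases "x = y")
        case False
        then have "f {x, y} = 1" using hom \<open>x \<in> Y\<close> \<open>y \<in> Y\<close> \<open>t = 1\<close> by blast
        then have "R x y" using f_pair[OF False] by (metis zero_neq_one)
        then show ?thesis by simp
      qed simp
    qed
    then show ?thesis using \<open>infinite Y\<close> fin[of x] finite_subset by auto
  qed
qed

theorem proposition3p16:
  fixes \<Lambda> :: "nat \<Rightarrow> (int^'m) set"
  assumes "\<And>i. proper_lattice (\<Lambda> i)"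
    and "\<And>i j. i \<noteq> j \<Longrightarrow> lattices_coprime (\<Lambda> i) (\<Lambda> j)"
  shows "\<exists>I :: nat set. infinite I \<and>
           (\<forall>i\<in>I. \<forall>j\<in>I. i \<noteq> j \<longrightarrow> coprime (lattice_index (\<Lambda> i)) (lattice_index (\<Lambda> j)))"
proof -
  let ?R = "\<lambda>i j. \<not> coprime (lattice_index (\<Lambda> i)) (lattice_index (\<Lambda> j))"
  have lattice: "\<And>i. is_lattice (\<Lambda> i)" using assms(1) by (simp add: proper_lattice_def)
  have "?R i j \<Longrightarrow> ?R j i" for i j by (simp add: coprime_commute)
  from infinite_independent_subset[OF infinite_UNIV_nat, of ?R, OF this
      finite_not_coprime_lattice_index[OF lattice assms(2)]]
  show ?thesis by auto
qed

end
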